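(* If $P$ is a quadrilateral (a $4$-sided polygon) with vertices $v_1,v_2,v_3,v_4\in\mathbb{C}$ in counterclockwise order that satisfies the closed cap condition, then $P$ is a parallelogram; more precisely $v_2 - v_1 = v_3 - v_4$.
   Context: Identify $\mathbb{R}^2$ with $\mathbb{C}$. An $n$-sided polygon is a closed region of the plane enclosed by a simple cycle of $n$ straight line segments; its vertices are the endpoints of these segments. For a polygon with vertices $v_1,\dots,v_n$ in counterclockwise order, set $v_{n+1}=v_1$, let $s_k = v_{k+1}-v_k$ be its $k$-th edge, and let $\theta_k\in(0,2\pi)$ be the internal angle at $v_k$. Cap construction (polygonal cap curve): set $\kappa = 4\pi/n$. For each $k$ let $\alpha_k = \pi - \theta_k$ (the counterclockwise turning angle of $P$ at $v_k$, so that $\arg s_k = \arg s_{k-1} + \alpha_k$), $\hat\theta_k = 2\pi - \theta_k - \kappa$, and $\beta_k = \pi - \hat\theta_k$ (so $\alpha_k+\beta_k = \kappa$). Put $\hat v_1 = v_1$, $\hat v_2 = v_2$, and for $k=2,\dots,n$ define $\hat v_{k+1} = \hat v_k + \hat s_k$, where $\hat s_k$ is the complex number with $|\hat s_k| = |s_k|$ whose direction is obtained by turning the direction of $\hat s_{k-1} = \hat v_k - \hat v_{k-1}$ clockwise by the angle $\beta_k$, i.e. $\hat s_k/|\hat s_k| = e^{-i\beta_k}\,\hat s_{k-1}/|\hat s_{k-1}|$. The points $\hat v_1,\dots,\hat v_{n+1}$ are the vertices of the polygonal cap curve of $P$. Closed cap condition: $P$ satisfies the closed cap condition if $\hat v_{n+1}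 = \hat v_1$. *)

theory Defs
  imports "HOL-Analysis.Analysis"
begin

text \<open>A polygon with n vertices is given by v :: nat => complex on indices 1..n.
  Indices are read cyclically: vtx n v 0 = v n, vtx n v (n+1) = v 1.\<close>

definition vtx :: "nat \<Rightarrow> (nat \<Rightarrow> complex) \<Rightarrow> nat \<Rightarrow> complex" where
  "vtx n v k = v (((k + n - 1) mod n) + 1)"

definition edge :: "nat \<Rightarrow> (nat \<Rightarrow> complex) \<Rightarrow> nat \<Rightarrow> complex" where
  "edge n v k = vtx n v (k + 1) - vtx n v k"

definition simple_polygon :: "nat \<Rightarrow> (nat \<Rightarrow> complex) \<Rightarrow> bool" where
  "simple_polygon n v \<longleftrightarrow> 3 \<le> n \<and> inj_on v {1..n} \<and>
     (\<forall>j\<in>{1..n}. \<forall>k\<in>{1..n}. j \<noteq> k \<longrightarrow>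
        closed_segment (vtx n v j) (vtx n v (j+1)) \<inter> closed_segment (vtx n v k) (vtx n v (k+1))
          \<subseteq> {vtx n v j, vtx n v (j+1)} \<inter> {vtx n v k, vtx n v (k+1)})"

text \<open>Counterclockwise order: positive signed (shoelace) area.\<close>
definition ccw_polygon :: "nat \<Rightarrow> (nat \<Rightarrow> complex) \<Rightarrow> bool" where
  "ccw_polygon n v \<longleftrightarrow> (\<Sum>k=1..n. Im (cnj (vtx n v k) * vtx n v (k+1))) > 0"

text \<open>Internal angle at v_k in (0, 2 pi): the counterclockwise angle from the direction
  of v_(k+1) - v_k to the direction of v_(k-1) - v_k (interior lies to the left).\<close>
definition int_angle :: "nat \<Rightarrow> (nat \<Rightarrow> complex) \<Rightarrow> nat \<Rightarrow> real" where
  "int_angle n v k =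
     (let a = Arg ((vtx n v (k + n - 1) - vtx n v k) / (vtx n v (k+1) - vtx n v k))
      in if 0 < a then a else a + 2 * pi)"

definition kappa :: "nat \<Rightarrow> real" where
  "kappa n = 4 * pi / real n"

text \<open>beta_k = pi - hat_theta_k, hat_theta_k = 2 pi - theta_k - kappa.\<close>
definition cap_beta :: "nat \<Rightarrow> (nat \<Rightarrow> complex) \<Rightarrow> nat \<Rightarrow> real" where
  "cap_beta n v k = pi - (2 * pi - int_angle n v k - kappa n)"

fun cap_edge :: "nat \<Rightarrow> (nat \<Rightarrow> complex) \<Rightarrow> nat \<Rightarrow> complex" where
  "cap_edge n v 0 = 0"
| "cap_edge n v (Suc 0) = vtx n v 2 - vtx n v 1"
| "cap_edge n v (Suc (Suc k)) =
     complex_of_real (norm (edge n v (k+2))) * cis (- cap_beta n v (k+2)) *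
       (cap_edge n v (Suc k) / complex_of_real (norm (cap_edge n v (Suc k))))"

fun cap_vtx :: "nat \<Rightarrow> (nat \<Rightarrow> complex) \<Rightarrow> nat \<Rightarrow> complex" where
  "cap_vtx n v 0 = vtx n v 1"
| "cap_vtx n v (Suc 0) = vtx n v 1"
| "cap_vtx n v (Suc (Suc k)) = cap_vtx n v (Suc k) + cap_edge n v (Suc k)"

definition closed_cap :: "nat \<Rightarrow> (nat \<Rightarrow> complex) \<Rightarrow> bool" where
  "closed_cap n v \<longleftrightarrow> cap_vtx n v (n+1) = cap_vtx n v 1"

end

theory Submission
  imports Defs
begin

text \<open>For a quadrilateral \<open>\<kappa> = \<pi>\<close>, so the cap turns clockwise by exactly the internal angle
  \<open>\<theta>\<^sub>k\<close>. Turning the direction of \<open>-s\<^sub>k\<^sub>-\<^sub>1\<close> clockwise by \<open>\<theta>\<^sub>k\<close> gives the direction of \<open>s\<^sub>k\<close>,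
  so the cap edges are \<open>s\<^sub>1, -s\<^sub>2, s\<^sub>3, -s\<^sub>4\<close>. Closing the cap means \<open>s\<^sub>1 - s\<^sub>2 + s\<^sub>3 - s\<^sub>4 = 0\<close>;
  adding \<open>s\<^sub>1 + s\<^sub>2 + s\<^sub>3 + s\<^sub>4 = 0\<close> gives \<open>s\<^sub>1 = -s\<^sub>3\<close>.\<close>

lemma vtx_eq_self:
  assumes "1 \<le> k" "k \<le> n"
  shows "vtx n v k = v k"
proof -
  have "k + n - 1 = (k - 1) + n" using assms by simp
  then have "(k + n - 1) mod n = k - 1" using assms by (simp only: mod_add_self2) simp
  then show ?thesis using assms by (simp add: vtx_def)
qed

lemma vtx_add_period: "0 < n \<Longrightarrow> vtx n v (k + n) = vtx n v k"
proof -
  assume "0 < n"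
  then have "k + n + n - 1 = (k + n - 1) + n" by simp
  then show ?thesis by (simp add: vtx_def)
qed

lemma vtx_Suc_neq:
  assumes "simple_polygon n v"
  shows "vtx n v (Suc k) \<noteq> vtx n v k"
proof -
  have n: "3 \<le> n" and inj: "inj_on v {1..n}"
    using assms by (simp_all add: simple_polygon_def)
  define m where "m = k + n - 1"
  have Suc_m: "(Suc k + n - 1) mod n = Suc m mod n" using n by (simp add: m_def)
  have "Suc m mod n \<noteq> m mod n"
    using n by (simp add: mod_Suc)
  moreover have "Suc m mod n + 1 \<in> {1..n}" "m mod n + 1 \<in> {1..n}"
    using n by (auto simp: Suc_le_eq)
  ultimately have "v (Suc m mod n + 1) \<noteq> v (m mod n + 1)"
    using inj_onD[OF inj] by fastforce
  then show ?thesis unfolding vtx_def Suc_m m_def .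
qed

lemma sum_edge_eq_0:
  assumes "0 < n"
  shows "(\<Sum>k=1..n. edge n v k) = 0"
proof -
  have "(\<Sum>k=1..n. edge n v k) = vtx n v (Suc n) - vtx n v 1"
    using sum_Suc_diff[where f = "vtx n v" and m = 1 and n = n] assms by (simp add: edge_def)
  also have "\<dots> = 0"
    using vtx_add_period[OF assms, where k = 1] by (simp add: add.commute)
  finally show ?thesis .
qed

lemma cap_vtx_Suc_eq_sum: "cap_vtx n v (Suc k) = vtx n v 1 + (\<Sum>j=1..k. cap_edge n v j)"
proof (induction k)
  case (Suc k)
  then show ?case by (cases k) (simp_all add: add.assoc)
qed simp

lemma closed_cap_iff_sum_cap_edge: "closed_cap n v \<longleftrightarrow> (\<Sum>j=1..n. cap_edge n v j) = 0"
  by (simp add: closed_cap_def cap_vtx_Suc_eq_sum[where k = n, simplified])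

lemma cis_int_angle:
  assumes "vtx n v (k + n - 1) \<noteq> vtx n v k" "edge n v k \<noteq> 0"
  shows "cis (int_angle n v k) = sgn ((vtx n v (k + n - 1) - vtx n v k) / edge n v k)"
proof -
  define q where "q = (vtx n v (k + n - 1) - vtx n v k) / edge n v k"
  have "q \<noteq> 0" using assms by (simp add: q_def)
  moreover have "cis (int_angle n v k) = cis (Arg q)"
    by (simp add: int_angle_def Let_def q_def edge_def cis.ctr)
  ultimately show ?thesis by (simp add: cis_Arg q_def)
qed

lemma cis_neg_int_angle_mult_sgn:
  assumes "vtx n v (k + n - 1) \<noteq> vtx n v k" "edge n v k \<noteq> 0"
  shows "cis (- int_angle n v k) * sgn (vtx n v (k + n - 1) - vtx n v k) = sgn (edge n v k)"
  using assms
  by (simp add: cis_inverse[symmetric] cis_int_angle sgn_divide field_simps sgn_eq_0_iff)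

lemma cap_beta_quadrilateral: "cap_beta 4 v k = int_angle 4 v k"
  by (simp add: cap_beta_def kappa_def)

lemma cap_edge_quadrilateral:
  assumes "simple_polygon 4 v"
  shows "cap_edge 4 v (Suc k) = (-1) ^ k * edge 4 v (Suc k)"
proof (induction k)
  case 0
  then show ?case by (simp add: edge_def numeral_2_eq_2)
next
  case (Suc k)
  define s where "s = edge 4 v (Suc k)"
  define e where "e = edge 4 v (Suc (Suc k))"
  define \<sigma> :: complex where "\<sigma> = (-1) ^ k"
  have e0: "e \<noteq> 0"
    using vtx_Suc_neq[OF assms] by (simp add: e_def edge_def)
  have prev: "vtx 4 v (Suc (Suc k) + 4 - 1) = vtx 4 v (Suc k)"
    using vtx_add_period[of 4 v "Suc k"] by (simp add: add.commute)
  have "sgn (vtx 4 v (Suc k) - vtx 4 v (Suc (Suc k))) = - sgn s"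
    unfolding s_def edge_def by (metis minus_diff_eq sgn_minus Suc_eq_plus1)
  then have turn: "cis (- int_angle 4 v (Suc (Suc k))) * sgn s = - sgn e"
    using cis_neg_int_angle_mult_sgn[of 4 v "Suc (Suc k)"] vtx_Suc_neq[OF assms, of "Suc k"] e0
    unfolding prev e_def by (simp add: edge_def) (metis minus_minus)
  have "cmod \<sigma> = 1" by (simp add: \<sigma>_def norm_power)
  then have dir: "cap_edge 4 v (Suc k) / of_real (cmod (cap_edge 4 v (Suc k))) = \<sigma> * sgn s"
    using Suc.IH by (simp add: s_def \<sigma>_def norm_mult sgn_eq)
  have "cap_edge 4 v (Suc (Suc k)) =
      \<sigma> * of_real (cmod e) * (cis (- int_angle 4 v (Suc (Suc k))) * sgn s)"
    by (simp add: dir e_def cap_beta_quadrilateral mult_ac)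
  also have "\<dots> = - \<sigma> * e"
    unfolding turn using e0 by (simp add: sgn_eq)
  finally show ?case by (simp add: \<sigma>_def e_def)
qed

lemma sum_1_to_4: "(\<Sum>k=1..(4::nat). f k) = f 1 + f 2 + f 3 + (f 4 :: 'a :: comm_monoid_add)"
  by (simp add: eval_nat_numeral add.assoc)

lemma closed_cap_quadrilateral_alternating:
  assumes "simple_polygon 4 v" "closed_cap 4 v"
  shows "edge 4 v 1 - edge 4 v 2 + edge 4 v 3 - edge 4 v 4 = 0"
proof -
  have "cap_edge 4 v 1 = edge 4 v 1"
    by (simp add: edge_def numeral_2_eq_2)
  moreover have "cap_edge 4 v 2 = - edge 4 v 2"
    using cap_edge_quadrilateral[OF assms(1), of 1] unfolding Suc_1 by simp
  moreover have "cap_edge 4 v 3 = edge 4 v 3" "cap_edge 4 v 4 = - edge 4 v 4"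
    using cap_edge_quadrilateral[OF assms(1), of 2] cap_edge_quadrilateral[OF assms(1), of 3]
    by simp_all
  moreover have "(\<Sum>k=1..4. cap_edge 4 v k) = 0"
    using assms(2) closed_cap_iff_sum_cap_edge by blast
  ultimately show ?thesis
    unfolding sum_1_to_4 by simp
qed

theorem proposition2p2:
  fixes v :: "nat \<Rightarrow> complex"
  assumes "simple_polygon 4 v"
    and "ccw_polygon 4 v"
    and "closed_cap 4 v"
  shows "v 2 - v 1 = v 3 - v 4"
proof -
  define s where "s = edge 4 v"
  have alternating: "s 1 - s 2 + s 3 - s 4 = 0"
    using closed_cap_quadrilateral_alternating[OF assms(1,3)] by (simp only: s_def)
  have "(\<Sum>k=1..4. s k) = 0"
    unfolding s_def by (rule sum_edge_eq_0) simp
  then have total: "s 1 + s 2 + s 3 + s 4 = 0"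
    unfolding sum_1_to_4 .
  have "2 * (s 1 + s 3) = (s 1 - s 2 + s 3 - s 4) + (s 1 + s 2 + s 3 + s 4)"
    by (simp add: algebra_simps)
  also have "\<dots> = 0"
    unfolding alternating total by simp
  finally have "s 1 + s 3 = 0"
    by (simp only: mult_eq_0_iff) simp
  then show ?thesis
    by (simp add: s_def edge_def vtx_eq_self algebra_simps numeral_2_eq_2)
qed

end
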